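(* Let $\mathcal{C}=\{c_a : a\in\mathcal{A}^*\}$ be a uniform family of quantum circuits (Alice's quantum computer), and let Bob possess a classical simulation scheme for $\mathcal{C}$. Consider the hypothesis testing scenario described in the context. Then Bob's scheme is an $\epsilon$-simulator of $\mathcal{C}$ if and only if, in this hypothesis testing scenario, there exists a strategy for Bob which jointly achieves indistinguishability and efficiency.
   Context: A uniform family of quantum circuits is $\mathcal{C}=\{c_a : a\in\mathcal{A}^*\}$, indexed by finite strings $a$ over a finite alphabet $\mathcal{A}$, with an efficiently computable map from $a$ to the circuit; $c_a$ acts on $n_a$ qubits, its size and description length are bounded by $\mathrm{poly}(n_a)$, and measuring it yields an outcome in $\{0,1\}^{k_a}$ distributed according to the Born-rule distribution $\mathcal{P}_a$. For distributions $\mathcal{P},\mathcal{P}'$ on a finite set, $\|\mathcal{P}-\mathcal{P}'\|_1=\sum_x|\mathcal{P}(x)-\mathcal{P}'(x)|$, and $B(\mathcal{P},\epsilon)$ is the set of distributions within $L_1$ distance $\epsilon$ of $\mathcal{P}$. A classical (randomized) algorithm is an $\epsilon$-simulator of $\mathcal{C}$ if for every $\epsilon>0$ and every $a\in\mathcal{A}^*$ it outputs a sample from some distribution $\mathcal{P}^\epsilon_a\in B(\mathcal{P}_a,\epsilon)$ in run-time $O(\mathrm{poly}(n_a,1/\epsilon))$. Hypothesis testing scenario: one of Alice or Bob is chosen uniformly at random as "the candidate". A referee with unbounded computational power, not knowing the candidate's identity, runs a finite interactive protocol: in each round the referee sends a circuit index $a\in\mathcal{A}^*$ (chosen as a function of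 all previously collected requests and responses), and the candidate returns an outcome; Alice returns a sample from $\mathcal{P}_a$ by running $c_a$, Bob returns the output of his strategy (his response in a round may depend only on the current request and the round number). The referee's rules for choosing requests, for halting, and for deciding between $H_a$ ("data came from Alice") and $H_b$ ("data came from Bob") constitute the test; $P_{correct}$ is the probability the referee decides correctly. Bob's strategy may depend on a parameter $\delta>0$; when he uses his simulator, in round $j$ he chooses an accuracy parameter $\epsilon_j$ and his cost in that round is $t_j=\mathrm{poly}(n_{a_j},1/\epsilon_j)$. For a request sequence $\alpha=(a_1,\dots,a_m)$, Alice's resource cost is $N(\alpha)=n_{a_1}+\dots+n_{a_m}$ and Bob's is $T(\alpha)=t_1+\dots+t_m$. Indistinguishability: for every $\delta>0$ and every test, $P_{correct}<\frac12+\delta$. Efficiency: there is a polynomial $f$ such that for all $\delta>0$ and all request sequences $\alpha$, $T(\alpha)\le f(N(\alpha),1/\delta)$. *)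

theory Defs
  imports "HOL-Probability.Probability"
begin

text \<open>The circuit family is represented by: n a (number of qubits of c_a),
  k a (number of output bits), P a (Born-rule output distribution of c_a).\<close>

definition circuit_family ::
  "('a::finite list \<Rightarrow> nat) \<Rightarrow> ('a list \<Rightarrow> nat) \<Rightarrow> ('a list \<Rightarrow> bool list pmf) \<Rightarrow> bool" where
  "circuit_family n k P \<longleftrightarrow>
     (\<forall>a. 1 \<le> n a \<and> k a \<le> n a \<and> set_pmf (P a) \<subseteq> {xs. length xs = k a})"

definition l1_dist :: "'b pmf \<Rightarrow> 'b pmf \<Rightarrow> real" where
  "l1_dist p q = (\<Sum>\<^sub>\<infinity> x. \<bar>pmf p x - pmf q x\<bar>)"

text \<open>Bob's classical simulation scheme: on input a circuit index a and an accuracy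
  parameter eps > 0 it outputs a sample of Sim a eps with run-time rt a eps.
  It is an eps-simulator if (choosing the accuracy parameter suitably) for every
  eps > 0 and every a it samples from a distribution in B(P a, eps) in time
  bounded by a polynomial in n a and 1/eps (uniformly in a and eps).\<close>
definition is_eps_simulator ::
  "('a list \<Rightarrow> nat) \<Rightarrow> ('a list \<Rightarrow> bool list pmf) \<Rightarrow> ('a list \<Rightarrow> real \<Rightarrow> bool list pmf)
     \<Rightarrow> ('a list \<Rightarrow> real \<Rightarrow> real) \<Rightarrow> bool" where
  "is_eps_simulator n P Sim rt \<longleftrightarrow>
     (\<exists>(c::real) (d::nat). \<forall>\<epsilon>>0. \<forall>a. \<exists>\<epsilon>'>0.
        l1_dist (Sim a \<epsilon>') (P a) \<le> \<epsilon> \<and> rt a \<epsilon>' \<le> c * (1 + real (n a) + 1 / \<epsilon>) ^ d)"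

type_synonym 'a transcript = "('a list \<times> bool list) list"

text \<open>Run of the interactive protocol: req is the referee's request rule (None = halt),
  resp j a is the candidate's response distribution in round j (counted from 1) to request a;
  the fuel bounds the number of rounds (finite protocol).\<close>
fun run_protocol ::
  "('a transcript \<Rightarrow> 'a list option) \<Rightarrow> (nat \<Rightarrow> 'a list \<Rightarrow> bool list pmf)
     \<Rightarrow> nat \<Rightarrow> nat \<Rightarrow> 'a transcript \<Rightarrow> 'a transcript pmf" where
  "run_protocol req resp 0 j tr = return_pmf tr"
| "run_protocol req resp (Suc m) j tr =
     (case req tr of
        None \<Rightarrow> return_pmf tr
      | Some a \<Rightarrow> bind_pmf (resp j a) (\<lambda>x. run_protocol req resp m (Suc j) (tr @ [(a, x)])))"

text \<open>Probability that the referee (request rule req, at most M rounds, decision rule dec,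
  dec tr = True meaning H_a) decides correctly when the candidate is Alice or Bob with
  probability 1/2 each.\<close>
definition P_correct ::
  "('a list \<Rightarrow> bool list pmf) \<Rightarrow> (nat \<Rightarrow> 'a list \<Rightarrow> bool list pmf)
     \<Rightarrow> ('a transcript \<Rightarrow> 'a list option) \<Rightarrow> ('a transcript \<Rightarrow> bool) \<Rightarrow> nat \<Rightarrow> real" where
  "P_correct P bob req dec M =
     1/2 * measure_pmf.prob (run_protocol req (\<lambda>j a. P a) M 1 []) {tr. dec tr}
   + 1/2 * measure_pmf.prob (run_protocol req bob M 1 []) {tr. \<not> dec tr}"

text \<open>Bob's strategy: for parameter delta, in round j on request a he runs his scheme with
  accuracy parameter e delta j a.\<close>
definition indistinguishable ::
  "('a list \<Rightarrow> bool list pmf) \<Rightarrow> ('a list \<Rightarrow> real \<Rightarrow> bool list pmf)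
     \<Rightarrow> (real \<Rightarrow> nat \<Rightarrow> 'a list \<Rightarrow> real) \<Rightarrow> bool" where
  "indistinguishable P Sim e \<longleftrightarrow>
     (\<forall>\<delta>>0. \<forall>req dec M. P_correct P (\<lambda>j a. Sim a (e \<delta> j a)) req dec M < 1/2 + \<delta>)"

definition efficient ::
  "('a list \<Rightarrow> nat) \<Rightarrow> ('a list \<Rightarrow> real \<Rightarrow> real) \<Rightarrow> (real \<Rightarrow> nat \<Rightarrow> 'a list \<Rightarrow> real) \<Rightarrow> bool" where
  "efficient n rt e \<longleftrightarrow>
     (\<exists>(c::real) (d::nat). \<forall>\<delta>>0. \<forall>\<alpha>::'a list list.
        (\<Sum>j<length \<alpha>. rt (\<alpha> ! j) (e \<delta> (Suc j) (\<alpha> ! j)))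
          \<le> c * (1 + real (\<Sum>i<length \<alpha>. n (\<alpha> ! i)) + 1 / \<delta>) ^ d)"

end

theory Submission
  imports Defs
begin

text \<open>If Bob's error in round \<open>j\<close> is at most \<open>\<delta>/((j+1)(j+2))\<close>, a hybrid argument bounds the
  referee's advantage by half the sum of these errors, which telescopes to less than \<open>\<delta>/4\<close>;
  the accuracies \<open>1/\<epsilon> = O(j\<^sup>2/\<delta>)\<close> with \<open>j \<le> N(\<alpha>)\<close> keep the total cost polynomial in
  \<open>N(\<alpha>)\<close> and \<open>1/\<delta>\<close>. Conversely, the one-round test that asks for \<open>c\<^sub>a\<close> and decides \<open>H\<^sub>a\<close>
  exactly on the outcomes at least as likely under \<open>\<P>\<^sub>a\<close> as under Bob's distribution has advantage
  a quarter of their \<open>L\<^sub>1\<close> distance, so indistinguishability puts Bob's first-round distribution in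
  \<open>B(\<P>\<^sub>a, 4\<delta>)\<close>, while efficiency on the one-element request sequence bounds its cost.\<close>

no_notation Infinite_Sum.abs_summable_on (infixr \<open>abs'_summable'_on\<close> 46)

lemma abs_summable_on_pmf_diff: "(\<lambda>x. pmf p x - pmf q x) abs_summable_on A"
  by auto

lemma l1_dist_eq_infsetsum: "l1_dist p q = infsetsum (\<lambda>x. \<bar>pmf p x - pmf q x\<bar>) UNIV"
proof -
  have "(\<lambda>x. \<bar>pmf p x - pmf q x\<bar>) abs_summable_on UNIV"
    using abs_summable_on_normI[OF abs_summable_on_pmf_diff] by fastforce
  then show ?thesis
    unfolding l1_dist_def by (rule infsetsum_infsum[symmetric])
qed

lemma l1_dist_commute: "l1_dist p q = l1_dist q p"
  unfolding l1_dist_def by (simp add: abs_minus_commute)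

lemma expectation_diff_le_l1_dist:
  assumes "\<And>x. 0 \<le> h x" and "\<And>x. h x \<le> 1"
  shows "measure_pmf.expectation p h - measure_pmf.expectation q h \<le> l1_dist p q"
proof -
  have summable: "(\<lambda>x. pmf r x * h x) abs_summable_on UNIV" for r
    by (rule abs_summable_on_comparison_test'[OF pmf_abs_summable[of r UNIV]])
       (use assms in \<open>auto intro: mult_left_le\<close>)
  have pointwise: "pmf p x * h x - pmf q x * h x \<le> \<bar>pmf p x - pmf q x\<bar>" for x
  proof -
    have "pmf p x * h x - pmf q x * h x = (pmf p x - pmf q x) * h x"
      by (simp add: algebra_simps)
    also have "\<dots> \<le> \<bar>pmf p x - pmf q x\<bar> * h x"
      using assms by (intro mult_right_mono) auto
    also have "\<dots> \<le> \<bar>pmf p x - pmf q x\<bar>"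
      using assms by (simp add: mult_left_le)
    finally show ?thesis .
  qed
  have "measure_pmf.expectation p h - measure_pmf.expectation q h
      = infsetsum (\<lambda>x. pmf p x * h x - pmf q x * h x) UNIV"
    by (simp add: pmf_expectation_eq_infsetsum infsetsum_diff[OF summable summable])
  also have "\<dots> \<le> infsetsum (\<lambda>x. \<bar>pmf p x - pmf q x\<bar>) UNIV"
    using summable abs_summable_on_normI[OF abs_summable_on_pmf_diff, of p q UNIV]
    by (intro infsetsum_mono pointwise) auto
  finally show ?thesis
    by (simp add: l1_dist_eq_infsetsum)
qed

lemma l1_dist_eq_prob_diff:
  "l1_dist p q = 2 * (measure_pmf.prob p {x. pmf q x \<le> pmf p x}
                    - measure_pmf.prob q {x. pmf q x \<le> pmf p x})"
proof -
  define S where "S = {x. pmf q x \<le> pmf p x}"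
  have summable: "(\<lambda>x. \<bar>pmf p x - pmf q x\<bar>) abs_summable_on A" for A
    using abs_summable_on_normI[OF abs_summable_on_pmf_diff] by fastforce
  have "l1_dist p q = infsetsum (\<lambda>x. \<bar>pmf p x - pmf q x\<bar>) (S \<union> -S)"
    by (simp add: l1_dist_eq_infsetsum)
  also have "\<dots> = infsetsum (\<lambda>x. \<bar>pmf p x - pmf q x\<bar>) S
                 + infsetsum (\<lambda>x. \<bar>pmf p x - pmf q x\<bar>) (-S)"
    by (rule infsetsum_Un_disjoint) (auto intro: summable)
  also have "infsetsum (\<lambda>x. \<bar>pmf p x - pmf q x\<bar>) S = infsetsum (\<lambda>x. pmf p x - pmf q x) S"
    by (rule infsetsum_cong) (auto simp: S_def)
  also have "\<dots> = measure_pmf.prob p S - measure_pmf.prob q S"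
    by (simp add: measure_pmf_conv_infsetsum infsetsum_diff[OF pmf_abs_summable pmf_abs_summable])
  also have "infsetsum (\<lambda>x. \<bar>pmf p x - pmf q x\<bar>) (-S) = infsetsum (\<lambda>x. pmf q x - pmf p x) (-S)"
    by (rule infsetsum_cong) (auto simp: S_def)
  also have "\<dots> = measure_pmf.prob q (-S) - measure_pmf.prob p (-S)"
    by (simp add: measure_pmf_conv_infsetsum infsetsum_diff[OF pmf_abs_summable pmf_abs_summable])
  also have "\<dots> = measure_pmf.prob p S - measure_pmf.prob q S"
    using measure_pmf.prob_compl[of S p] measure_pmf.prob_compl[of S q]
    by (simp add: Compl_eq_Diff_UNIV)
  finally show ?thesis
    by (simp add: S_def)
qed

lemma measure_pmf_prob_bind_pmf:
  "measure_pmf.prob (bind_pmf M N) X = measure_pmf.expectation M (\<lambda>x. measure_pmf.prob (N x) X)"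
proof -
  have "ennreal (measure_pmf.prob (bind_pmf M N) X) = (\<integral>\<^sup>+x. ennreal (measure_pmf.prob (N x) X) \<partial>M)"
    by (simp add: measure_pmf.emeasure_eq_measure[symmetric])
  also have "\<dots> = ennreal (measure_pmf.expectation M (\<lambda>x. measure_pmf.prob (N x) X))"
    by (rule nn_integral_eq_integral) (auto intro!: measure_pmf.integrable_const_bound[where B=1])
  finally show ?thesis
    by (simp add: integral_nonneg_AE)
qed

text \<open>Hybrid argument: replace the candidate round by round, starting with the first.\<close>

lemma run_protocol_prob_diff_le:
  assumes "\<And>j a. l1_dist (P a) (B j a) \<le> err j" and "\<And>j. 0 \<le> err j"
  shows "measure_pmf.prob (run_protocol req (\<lambda>j a. P a) m j tr) D
       - measure_pmf.prob (run_protocol req B m j tr) D \<le> (\<Sum>i\<in>{j..<j+m}. err i)"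
proof (induction m arbitrary: j tr)
  case 0
  then show ?case by simp
next
  case (Suc m)
  show ?case
  proof (cases "req tr")
    case None
    then show ?thesis
      by (simp add: sum_nonneg assms(2))
  next
    case (Some a)
    define fA where "fA = (\<lambda>x. measure_pmf.prob (run_protocol req (\<lambda>j a. P a) m (Suc j) (tr @ [(a, x)])) D)"
    define fB where "fB = (\<lambda>x. measure_pmf.prob (run_protocol req B m (Suc j) (tr @ [(a, x)])) D)"
    have integrable: "integrable (measure_pmf M) fA" "integrable (measure_pmf M) fB" for M
      unfolding fA_def fB_def by (auto intro: measure_pmf.integrable_const_bound[where B=1])
    have later_rounds:
      "measure_pmf.expectation (P a) fA - measure_pmf.expectation (P a) fB
         \<le> (\<Sum>i\<in>{Suc j..<Suc j+m}. err i)"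
    proof -
      have "measure_pmf.expectation (P a) fA - measure_pmf.expectation (P a) fB
          = measure_pmf.expectation (P a) (\<lambda>x. fA x - fB x)"
        using integrable by simp
      also have "\<dots> \<le> measure_pmf.expectation (P a) (\<lambda>x. \<Sum>i\<in>{Suc j..<Suc j+m}. err i)"
        using integrable unfolding fA_def fB_def by (intro integral_mono Suc.IH) auto
      finally show ?thesis by simp
    qed
    have this_round: "measure_pmf.expectation (P a) fB - measure_pmf.expectation (B j a) fB \<le> err j"
      using expectation_diff_le_l1_dist[of fB "P a" "B j a"] assms(1)[of a j]
      by (auto simp: fB_def)
    have "measure_pmf.prob (run_protocol req (\<lambda>j a. P a) (Suc m) j tr) D
        - measure_pmf.prob (run_protocol req B (Suc m) j tr) D
        = (measure_pmf.expectation (P a) fA - measure_pmf.expectation (P a) fB)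
          + (measure_pmf.expectation (P a) fB - measure_pmf.expectation (B j a) fB)"
      using Some by (simp add: measure_pmf_prob_bind_pmf fA_def fB_def)
    moreover have "(\<Sum>i\<in>{j..<j+Suc m}. err i) = err j + (\<Sum>i\<in>{Suc j..<Suc j+m}. err i)"
      by (simp add: sum.atLeast_Suc_lessThan)
    ultimately show ?thesis
      using later_rounds this_round by linarith
  qed
qed

lemma P_correct_le_sum_errors:
  assumes "\<And>j a. l1_dist (P a) (B j a) \<le> err j" and "\<And>j. 0 \<le> err j"
  shows "P_correct P B req dec M \<le> 1/2 + 1/2 * (\<Sum>i\<in>{1..<1+M}. err i)"
proof -
  let ?A = "run_protocol req (\<lambda>j a. P a) M 1 []" and ?B = "run_protocol req B M 1 []"
  have "measure_pmf.prob ?B {tr. \<not> dec tr} = 1 - measure_pmf.prob ?B {tr. dec tr}"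
    using measure_pmf.prob_compl[of "{tr. dec tr}" ?B] by (simp add: Compl_eq_Diff_UNIV Collect_neg_eq)
  moreover have "measure_pmf.prob ?A {tr. dec tr} - measure_pmf.prob ?B {tr. dec tr}
      \<le> (\<Sum>i\<in>{1..<1+M}. err i)"
    by (rule run_protocol_prob_diff_le[OF assms])
  ultimately show ?thesis
    unfolding P_correct_def by linarith
qed

lemma P_correct_single_request:
  "P_correct P B (\<lambda>tr. if tr = [] then Some a else None) dec 1
     = 1/2 * measure_pmf.prob (P a) {x. dec [(a, x)]}
     + 1/2 * measure_pmf.prob (B 1 a) {x. \<not> dec [(a, x)]}"
proof -
  have run: "run_protocol (\<lambda>tr. if tr = [] then Some a else None) resp 1 1 []
      = map_pmf (\<lambda>x. [(a, x)]) (resp 1 a)" for resp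
    by (simp add: map_pmf_def)
  show ?thesis
    by (simp only: P_correct_def run measure_map_pmf vimage_def mem_Collect_eq)
qed

lemma sum_inverse_consecutive_products:
  "(\<Sum>i\<in>{1..<1+M}. 1 / (real (i+1) * real (i+2))) = 1/2 - 1 / real (M+2)"
proof (induction M)
  case 0
  then show ?case by simp
next
  case (Suc M)
  have "{1..<1 + Suc M} = insert (Suc M) {1..<1+M}"
    by auto
  then have "(\<Sum>i\<in>{1..<1 + Suc M}. 1 / (real (i+1) * real (i+2)))
      = 1 / (real (M+2) * real (M+3)) + (1/2 - 1 / real (M+2))"
    using Suc by simp
  also have "\<dots> = 1/2 - 1 / real (Suc M + 2)"
  proof -
    have "1 / (real (M+2) * real (M+3)) = 1 / real (M+2) - 1 / real (M+3)"
      by (simp add: field_simps)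
    then show ?thesis by simp
  qed
  finally show ?case .
qed

lemma indistinguishable_if_l1_dist_le:
  assumes "\<And>\<delta> j a. \<delta> > 0 \<Longrightarrow> l1_dist (Sim a (e \<delta> j a)) (P a) \<le> \<delta> / (real (j+1) * real (j+2))"
  shows "indistinguishable P Sim e"
  unfolding indistinguishable_def
proof (intro allI impI)
  fix \<delta> :: real and req dec M
  assume "\<delta> > 0"
  have "P_correct P (\<lambda>j a. Sim a (e \<delta> j a)) req dec M
      \<le> 1/2 + 1/2 * (\<Sum>i\<in>{1..<1+M}. \<delta> * (1 / (real (i+1) * real (i+2))))"
    using assms[OF \<open>\<delta> > 0\<close>] \<open>\<delta> > 0\<close>
    by (intro P_correct_le_sum_errors) (auto simp: l1_dist_commute)
  also have "\<dots> = 1/2 + 1/2 * (\<delta> * (1/2 - 1 / real (M+2)))"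
    by (simp only: sum_distrib_left[symmetric] sum_inverse_consecutive_products)
  also have "\<dots> < 1/2 + \<delta>"
  proof -
    have "0 \<le> \<delta> * (1 / real (M+2))"
      using \<open>\<delta> > 0\<close> by simp
    then show ?thesis
      using \<open>\<delta> > 0\<close> by (simp only: right_diff_distrib)
  qed
  finally show "P_correct P (\<lambda>j a. Sim a (e \<delta> j a)) req dec M < 1/2 + \<delta>" .
qed

text \<open>The referee requests \<open>a\<close> once and decides \<open>H\<^sub>a\<close> exactly on the outcomes favoured by \<open>\<P>\<^sub>a\<close>.\<close>

lemma l1_dist_lt_if_indistinguishable:
  assumes "indistinguishable P Sim e" and "\<delta> > 0"
  shows "l1_dist (Sim a (e \<delta> 1 a)) (P a) < 4 * \<delta>"
proof -
  define Q where "Q = Sim a (e \<delta> 1 a)"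
  define S where "S = {x. pmf Q x \<le> pmf (P a) x}"
  have "P_correct P (\<lambda>j a. Sim a (e \<delta> j a)) (\<lambda>tr. if tr = [] then Some a else None)
          (\<lambda>tr. snd (hd tr) \<in> S) 1 < 1/2 + \<delta>"
    using assms unfolding indistinguishable_def by blast
  then have "1/2 * measure_pmf.prob (P a) S + 1/2 * measure_pmf.prob Q (-S) < 1/2 + \<delta>"
    unfolding P_correct_single_request by (simp add: Q_def Compl_eq)
  moreover have "measure_pmf.prob Q (-S) = 1 - measure_pmf.prob Q S"
    using measure_pmf.prob_compl[of S Q] by (simp add: Compl_eq_Diff_UNIV)
  ultimately have "measure_pmf.prob (P a) S - measure_pmf.prob Q S < 2 * \<delta>"
    by linarith
  then show ?thesis
    using l1_dist_eq_prob_diff[of "P a" Q] l1_dist_commute[of Q "P a"]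
    by (simp add: Q_def S_def)
qed

lemma efficient_if_round_cost_le:
  assumes "\<And>a. 1 \<le> n a"
    and "\<And>\<delta> j a. \<delta> > 0 \<Longrightarrow> rt a (e \<delta> j a) \<le> c * (1 + real (n a) + real (j+1) * real (j+2) / \<delta>) ^ d"
  shows "efficient n rt e"
  unfolding efficient_def
proof (intro exI allI impI)
  fix \<delta> :: real and \<alpha> :: "'a list list"
  assume "\<delta> > 0"
  define m where "m = length \<alpha>"
  define N where "N = (\<Sum>i<m. n (\<alpha> ! i))"
  define X where "X = 1 + real N + 1 / \<delta>"
  define C where "C = max c 0"
  have "m \<le> N"
    unfolding N_def using sum_mono[of "{..<m}" "\<lambda>_. 1::nat" "\<lambda>i. n (\<alpha> ! i)"] assms(1) by simp
  have "real m \<le> real N"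
    using \<open>m \<le> N\<close> by simp
  moreover have "0 < 1 / \<delta>"
    using \<open>\<delta> > 0\<close> by simp
  ultimately have X: "1 \<le> X" "1 + real N \<le> X" "1 / \<delta> \<le> X" "real m \<le> real N" "real m \<le> X"
    unfolding X_def by linarith+
  have round_cost: "rt (\<alpha> ! j) (e \<delta> (Suc j) (\<alpha> ! j)) \<le> C * 5 ^ d * X ^ (3*d)" if "j < m" for j
  proof -
    have "n (\<alpha> ! j) \<le> N"
      unfolding N_def using that by (intro member_le_sum) auto
    then have "real (n (\<alpha> ! j)) \<le> real N"
      by simp
    moreover have "real (Suc j + 1) * real (Suc j + 2) / \<delta> \<le> 4 * X^3"
    proof -
      have "real (Suc j + 1) \<le> 2*X" "real (Suc j + 2) \<le> 2*X"
        using that X by linarith+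
      have "real (Suc j + 1) * real (Suc j + 2) / \<delta> = real (Suc j + 1) * real (Suc j + 2) * (1/\<delta>)"
        by simp
      also have "\<dots> \<le> (2*X) * (2*X) * X"
        using X \<open>\<delta> > 0\<close> \<open>real (Suc j + 1) \<le> 2*X\<close> \<open>real (Suc j + 2) \<le> 2*X\<close>
        by (intro mult_mono) auto
      also have "\<dots> = 4 * X^3"
        by (simp add: power3_eq_cube)
      finally show ?thesis .
    qed
    moreover have "X \<le> X^3"
      using X(1) power_increasing[of 1 3 X] by simp
    ultimately have base: "1 + real (n (\<alpha> ! j)) + real (Suc j + 1) * real (Suc j + 2) / \<delta> \<le> 5 * X^3"
      using X by linarith
    have "rt (\<alpha> ! j) (e \<delta> (Suc j) (\<alpha> ! j))
        \<le> c * (1 + real (n (\<alpha> ! j)) + real (Suc j + 1) * real (Suc j + 2) / \<delta>) ^ d"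
      using assms(2)[OF \<open>\<delta> > 0\<close>] .
    also have "\<dots> \<le> C * (1 + real (n (\<alpha> ! j)) + real (Suc j + 1) * real (Suc j + 2) / \<delta>) ^ d"
      using \<open>\<delta> > 0\<close> by (intro mult_right_mono) (auto simp: C_def)
    also have "\<dots> \<le> C * (5 * X^3) ^ d"
      using \<open>\<delta> > 0\<close> by (intro mult_left_mono power_mono base) (auto simp: C_def)
    finally show ?thesis
      by (simp add: power_mult_distrib power_mult)
  qed
  have "(\<Sum>j<m. rt (\<alpha> ! j) (e \<delta> (Suc j) (\<alpha> ! j))) \<le> real m * (C * 5 ^ d * X ^ (3*d))"
    using sum_mono[of "{..<m}", OF round_cost] by simp
  also have "\<dots> \<le> X * (C * 5 ^ d * X ^ (3*d))"
    using X by (intro mult_right_mono) (auto simp: C_def)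
  finally show "(\<Sum>j<length \<alpha>. rt (\<alpha> ! j) (e \<delta> (Suc j) (\<alpha> ! j)))
      \<le> (C * 5 ^ d) * (1 + real (\<Sum>i<length \<alpha>. n (\<alpha> ! i)) + 1 / \<delta>) ^ (3*d + 1)"
    by (simp add: m_def N_def X_def algebra_simps)
qed

lemma strategy_if_eps_simulator:
  assumes "\<And>a. 1 \<le> n a" and "is_eps_simulator n P Sim rt"
  shows "\<exists>e. (\<forall>\<delta>>0. \<forall>j a. e \<delta> j a > 0) \<and> indistinguishable P Sim e \<and> efficient n rt e"
proof -
  obtain c d where sim: "\<forall>\<epsilon>>0. \<forall>a. \<exists>\<epsilon>'>0.
      l1_dist (Sim a \<epsilon>') (P a) \<le> \<epsilon> \<and> rt a \<epsilon>' \<le> c * (1 + real (n a) + 1 / \<epsilon>) ^ d"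
    using assms(2) unfolding is_eps_simulator_def by blast
  have "\<forall>\<delta> j a. \<exists>\<epsilon>'. \<delta> > 0 \<longrightarrow> \<epsilon>' > 0
      \<and> l1_dist (Sim a \<epsilon>') (P a) \<le> \<delta> / (real (j+1) * real (j+2))
      \<and> rt a \<epsilon>' \<le> c * (1 + real (n a) + real (j+1) * real (j+2) / \<delta>) ^ d"
  proof (intro allI)
    fix \<delta> :: real and j :: nat and a
    show "\<exists>\<epsilon>'. \<delta> > 0 \<longrightarrow> \<epsilon>' > 0
      \<and> l1_dist (Sim a \<epsilon>') (P a) \<le> \<delta> / (real (j+1) * real (j+2))
      \<and> rt a \<epsilon>' \<le> c * (1 + real (n a) + real (j+1) * real (j+2) / \<delta>) ^ d"
    proof (cases "\<delta> > 0")
      case True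
      then have "\<delta> / (real (j+1) * real (j+2)) > 0"
        by simp
      with sim show ?thesis
        by fastforce
    qed simp
  qed
  then obtain e where e: "\<And>\<delta> j a. \<delta> > 0 \<Longrightarrow> e \<delta> j a > 0
      \<and> l1_dist (Sim a (e \<delta> j a)) (P a) \<le> \<delta> / (real (j+1) * real (j+2))
      \<and> rt a (e \<delta> j a) \<le> c * (1 + real (n a) + real (j+1) * real (j+2) / \<delta>) ^ d"
    by metis
  have "indistinguishable P Sim e"
    using e by (intro indistinguishable_if_l1_dist_le) blast
  moreover have "efficient n rt e"
    using e assms(1) by (intro efficient_if_round_cost_le) blast+
  ultimately show ?thesis
    using e by blast
qed

lemma eps_simulator_if_strategy:
  assumes "\<forall>\<delta>>0. \<forall>j a. e \<delta> j a > 0" and "indistinguishable P Sim e" and "efficient n rt e"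
  shows "is_eps_simulator n P Sim rt"
proof -
  obtain c d where cost: "\<And>\<delta> \<alpha>. \<delta> > 0 \<Longrightarrow>
      (\<Sum>j<length \<alpha>. rt (\<alpha> ! j) (e \<delta> (Suc j) (\<alpha> ! j)))
        \<le> c * (1 + real (\<Sum>i<length \<alpha>. n (\<alpha> ! i)) + 1 / \<delta>) ^ d"
    using assms(3) unfolding efficient_def by blast
  define C where "C = max c 0"
  have "\<exists>\<epsilon>'>0. l1_dist (Sim a \<epsilon>') (P a) \<le> \<epsilon> \<and> rt a \<epsilon>' \<le> C * 4 ^ d * (1 + real (n a) + 1 / \<epsilon>) ^ d"
    if "\<epsilon> > 0" for \<epsilon> a
  proof -
    define \<delta> where "\<delta> = \<epsilon> / 4"
    have "\<delta> > 0"
      using that by (simp add: \<delta>_def)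
    have "l1_dist (Sim a (e \<delta> 1 a)) (P a) \<le> \<epsilon>"
      using l1_dist_lt_if_indistinguishable[OF assms(2) \<open>\<delta> > 0\<close>, of a]
      unfolding \<delta>_def by linarith
    moreover have "rt a (e \<delta> 1 a) \<le> C * 4 ^ d * (1 + real (n a) + 1 / \<epsilon>) ^ d"
    proof -
      have "rt a (e \<delta> 1 a) \<le> c * (1 + real (n a) + 1 / \<delta>) ^ d"
        using cost[OF \<open>\<delta> > 0\<close>, of "[a]"] by simp
      also have "\<dots> \<le> C * (1 + real (n a) + 1 / \<delta>) ^ d"
        using \<open>\<delta> > 0\<close> by (intro mult_right_mono) (auto simp: C_def)
      also have "\<dots> \<le> C * (4 * (1 + real (n a) + 1 / \<epsilon>)) ^ d"
        using that by (intro mult_left_mono power_mono) (auto simp: \<delta>_def C_def)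
      finally show ?thesis
        by (simp only: power_mult_distrib mult.assoc)
    qed
    ultimately show ?thesis
      using assms(1) \<open>\<delta> > 0\<close> by blast
  qed
  then show ?thesis
    unfolding is_eps_simulator_def by blast
qed

theorem theorem1:
  fixes n k :: "'a::finite list \<Rightarrow> nat"
    and P :: "'a list \<Rightarrow> bool list pmf"
    and Sim :: "'a list \<Rightarrow> real \<Rightarrow> bool list pmf"
    and rt :: "'a list \<Rightarrow> real \<Rightarrow> real"
  assumes "circuit_family n k P"
  shows "is_eps_simulator n P Sim rt \<longleftrightarrow>
    (\<exists>e. (\<forall>\<delta>>0. \<forall>j a. e \<delta> j a > 0) \<and> indistinguishable P Sim e \<and> efficient n rt e)"
proof -
  have "\<And>a. 1 \<le> n a"
    using assms unfolding circuit_family_def by blast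
  then show ?thesis
    using strategy_if_eps_simulator eps_simulator_if_strategy by blast
qed

end
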